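(* Assume the standing hypotheses described in the context. Take $0\le\theta\le\Theta$ and $N_\theta\in\mathcal N_\theta$. Then for any $(t,\varepsilon)\in\Omega$ and $x\in K(t,\varepsilon)$, \[N_\theta(K(t,\varepsilon))\subset K(n_\theta(t,\varepsilon))\subset K,\qquad \|N_\theta(x)-x\|\le t_+-t,\] where $t_+$ is the first component of $n_\theta(t,\varepsilon)$. Moreover, $n_\theta(\Omega)\subset\Omega$ and $N_\theta(K)\subset K$.
   Context: Standing hypotheses: $\mathbb X,\mathbb Y$ are Banach spaces; $B(x,r)$ is the open ball. $R\in\mathbb R$, $C\subseteq\mathbb X$, $F:C\to\mathbb Y$ is continuous and continuously differentiable on $\mathrm{int}(C)$, $x_0\in\mathrm{int}(C)$ with $F'(x_0)$ non-singular, $f:[0,R)\to\mathbb R$ is continuously differentiable, $B(x_0,R)\subseteq C$, $\|F'(x_0)^{-1}[F'(y)-F'(x)]\|\le f'(\|y-x\|+\|x-x_0\|)-f'(\|x-x_0\|)$ for all $x,y\in B(x_0,R)$ with $\|x-x_0\|+\|y-x\|<R$, $\|F'(x_0)^{-1}F(x_0)\|\le f(0)$, and (h1) $f(0)>0$, $f'(0)=-1$; (h2) $f'$ is strictly increasing and convex; (h3) $f(t)<0$ for some $t\in(0,R)$. Notation: $\bar t:=\sup\{t\in[0,R):f'(t)<0\}$, $\kappa:=\sup_{0<t<R}\frac{-f(t)}{t}$, $\lambda:=\sup\{t\in[0,R):\kappa+f'(t)<0\}$, $\Theta:=\kappa/(2-\kappa)$. For $\theta\ge0$, $n_\theta:[0,\bar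 t)\times[0,\infty)\to\mathbb R^2$, $n_\theta(t,\varepsilon):=\big(t-(1+\theta)\frac{f(t)+\varepsilon}{f'(t)},\ \varepsilon+2\theta(f(t)+\varepsilon)\big)$. $\Omega:=\{(t,\varepsilon)\in\mathbb R^2:0\le t<\lambda,\ 0\le\varepsilon\le\kappa t,\ 0<f(t)+\varepsilon\}$. $K(t,\varepsilon):=\{x:\|x-x_0\|\le t,\ \|F'(x_0)^{-1}F(x)\|\le f(t)+\varepsilon\}$ and $K:=\bigcup_{(t,\varepsilon)\in\Omega}K(t,\varepsilon)$. $\mathcal N_\theta$ is the family of maps $N:B(x_0,\bar t)\to\mathbb X$ such that $\|F'(x_0)^{-1}[F(x)+F'(x)(N(x)-x)]\|\le\theta\|F'(x_0)^{-1}F(x)\|$ for each $x\in B(x_0,\bar t)$. *)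

theory Defs
  imports "HOL-Analysis.Analysis"
begin

definition tbar :: "(real \<Rightarrow> real) \<Rightarrow> real \<Rightarrow> real" where
  "tbar f' R = Sup {t \<in> {0..<R}. f' t < 0}"

definition kappa :: "(real \<Rightarrow> real) \<Rightarrow> real \<Rightarrow> real" where
  "kappa f R = Sup ((\<lambda>t. - f t / t) ` {0<..<R})"

definition lam :: "(real \<Rightarrow> real) \<Rightarrow> (real \<Rightarrow> real) \<Rightarrow> real \<Rightarrow> real" where
  "lam f f' R = Sup {t \<in> {0..<R}. kappa f R + f' t < 0}"

definition Theta :: "(real \<Rightarrow> real) \<Rightarrow> real \<Rightarrow> real" where
  "Theta f R = kappa f R / (2 - kappa f R)"

definition n_theta :: "(real \<Rightarrow> real) \<Rightarrow> (real \<Rightarrow> real) \<Rightarrow> real \<Rightarrow> real \<times> real \<Rightarrow> real \<times> real" where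
  "n_theta f f' \<theta> p = (case p of (t, \<epsilon>) \<Rightarrow>
      (t - (1 + \<theta>) * (f t + \<epsilon>) / f' t, \<epsilon> + 2 * \<theta> * (f t + \<epsilon>)))"

definition Omega :: "(real \<Rightarrow> real) \<Rightarrow> (real \<Rightarrow> real) \<Rightarrow> real \<Rightarrow> (real \<times> real) set" where
  "Omega f f' R = {(t, \<epsilon>). 0 \<le> t \<and> t < lam f f' R \<and> 0 \<le> \<epsilon> \<and> \<epsilon> \<le> kappa f R * t \<and> 0 < f t + \<epsilon>}"

text \<open>K(t,eps); Finv stands for the inverse of F'(x0).\<close>

definition Kset :: "('b::real_normed_vector \<Rightarrow>\<^sub>L 'a::real_normed_vector) \<Rightarrow> ('a \<Rightarrow> 'b) \<Rightarrow> 'a \<Rightarrow> (real \<Rightarrow> real) \<Rightarrow> real \<times> real \<Rightarrow> 'a set" where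
  "Kset Finv F x0 f p = (case p of (t, \<epsilon>) \<Rightarrow>
      {x. norm (x - x0) \<le> t \<and> norm (blinfun_apply Finv (F x)) \<le> f t + \<epsilon>})"

definition Kall :: "('b::real_normed_vector \<Rightarrow>\<^sub>L 'a::real_normed_vector) \<Rightarrow> ('a \<Rightarrow> 'b) \<Rightarrow> 'a \<Rightarrow> (real \<Rightarrow> real) \<Rightarrow> (real \<Rightarrow> real) \<Rightarrow> real \<Rightarrow> 'a set" where
  "Kall Finv F x0 f f' R = (\<Union>p \<in> Omega f f' R. Kset Finv F x0 f p)"

definition Nfamily :: "('b::real_normed_vector \<Rightarrow>\<^sub>L 'a::real_normed_vector) \<Rightarrow> ('a \<Rightarrow> 'b) \<Rightarrow> ('a \<Rightarrow> ('a \<Rightarrow>\<^sub>L 'b)) \<Rightarrow> 'a \<Rightarrow> real \<Rightarrow> real \<Rightarrow> ('a \<Rightarrow> 'a) set" where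
  "Nfamily Finv F F' x0 tb \<theta> = {N. \<forall>x \<in> ball x0 tb.
      norm (blinfun_apply Finv (F x + blinfun_apply (F' x) (N x - x))) \<le> \<theta> * norm (blinfun_apply Finv (F x))}"

end

theory Submission
  imports Defs
begin

text \<open>From \<open>x \<in> K(t, \<epsilon>)\<close>, the majorant condition gives \<open>\<parallel>Finv (F' x d)\<parallel> \<ge> - f' t \<parallel>d\<parallel>\<close>, so an
  inexact Newton step has length at most \<open>(1 + \<theta>) (f t + \<epsilon>) / - f' t = t\<^sub>+ - t\<close>, and the
  linearization error of \<open>F\<close> along it is at most that of \<open>f\<close> at \<open>t\<close>, which bounds the new
  residual by \<open>f t\<^sub>+ + \<epsilon> + 2 \<theta> (f t + \<epsilon>)\<close>. That \<open>n\<^sub>\<theta>\<close> maps \<open>\<Omega>\<close> into itself is purely scalar: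
  \<open>f r + \<kappa> r \<ge> 0\<close> with infimum \<open>0\<close> on \<open>(0, R)\<close>; as \<open>\<theta> \<le> \<Theta>\<close>, the tangent of this function at
  \<open>t\<close> is still positive at \<open>t\<^sub>+\<close>, so by convexity \<open>f' + \<kappa> < 0\<close> up to beyond \<open>t\<^sub>+\<close>, i.e. \<open>t\<^sub>+ < \<lambda>\<close>.\<close>

lemma strict_mono_derivative_above_tangent:
  fixes f f' :: "real \<Rightarrow> real"
  assumes I: "is_interval I"
    and deriv: "\<forall>t \<in> I. (f has_real_derivative f' t) (at t within I)"
    and mono: "strict_mono_on I f'"
    and r: "r \<in> I" and s: "s \<in> I" and "r \<noteq> s"
  shows "f s + f' s * (r - s) < f r"
proof -
  have mvt: "\<exists>x \<in> {a<..<b}. f b - f a = f' x * (b - a)"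
    if "a \<in> I" "b \<in> I" "a < b" for a b
  proof -
    have ab: "{a..b} \<subseteq> I"
      using I that unfolding is_interval_1 by (meson atLeastAtMost_iff subsetI)
    have "(f has_derivative (\<lambda>h. f' x * h)) (at x within {a..b})" if "x \<in> {a..b}" for x
    proof -
      have "(f has_real_derivative f' x) (at x within {a..b})"
        using deriv that ab has_field_derivative_subset by blast
      then show ?thesis by (simp add: has_field_derivative_def mult_commute_abs)
    qed
    then show ?thesis using mvt_simple[OF \<open>a < b\<close>, of f "\<lambda>x h. f' x * h"] by force
  qed
  show ?thesis
  proof (cases "s < r")
    case True
    with mvt[OF s r] obtain x where x: "x \<in> {s<..<r}" "f r - f s = f' x * (r - s)" by blast
    have "x \<in> I" using I r s x unfolding is_interval_1 by (meson greaterThanLessThan_iff less_imp_le)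
    then have "f' s < f' x" using x s by (intro strict_mono_onD[OF mono]) auto
    then have "f' s * (r - s) < f' x * (r - s)" using True by (intro mult_strict_right_mono) auto
    with x show ?thesis by linarith
  next
    case False
    with \<open>r \<noteq> s\<close> have "r < s" by simp
    with mvt[OF r s] obtain x where x: "x \<in> {r<..<s}" "f s - f r = f' x * (s - r)" by blast
    have "x \<in> I" using I r s x unfolding is_interval_1 by (meson greaterThanLessThan_iff less_imp_le)
    then have "f' x < f' s" using x s by (intro strict_mono_onD[OF mono]) auto
    then have "f' x * (s - r) < f' s * (s - r)" using \<open>r < s\<close> by (intro mult_strict_right_mono) auto
    with x show ?thesis by (simp add: algebra_simps)
  qed
qed

lemma convex_on_increment_mono:
  fixes g :: "real \<Rightarrow> real"
  assumes g: "convex_on I g" and "a \<in> I" "b + h \<in> I" "a \<le> b" "0 \<le> h"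
  shows "g (a + h) - g a \<le> g (b + h) - g b"
proof (cases "b + h = a")
  case True
  with assms have "h = 0" "b = a" by auto
  then show ?thesis by simp
next
  case False
  with assms have pos: "b + h - a > 0" by simp
  define \<mu> where "\<mu> = h / (b + h - a)"
  have \<mu>: "0 \<le> \<mu>" "\<mu> \<le> 1" using pos assms by (auto simp: \<mu>_def divide_simps)
  have \<mu>h: "\<mu> * (b + h - a) = h" using pos by (simp add: \<mu>_def)
  have "(1 - \<mu>) *\<^sub>R a + \<mu> *\<^sub>R (b + h) = a + \<mu> * (b + h - a)"
    "(1 - (1 - \<mu>)) *\<^sub>R a + (1 - \<mu>) *\<^sub>R (b + h) = b + h - \<mu> * (b + h - a)"
    by (simp_all add: algebra_simps)
  then have a_h: "(1 - \<mu>) *\<^sub>R a + \<mu> *\<^sub>R (b + h) = a + h"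
    and b: "(1 - (1 - \<mu>)) *\<^sub>R a + (1 - \<mu>) *\<^sub>R (b + h) = b"
    by (simp_all only: \<mu>h)
  have "g (a + h) \<le> (1 - \<mu>) * g a + \<mu> * g (b + h)"
    using convex_onD[OF g \<mu> \<open>a \<in> I\<close> \<open>b + h \<in> I\<close>] a_h by simp
  moreover have "g b \<le> \<mu> * g a + (1 - \<mu>) * g (b + h)"
    using convex_onD[OF g _ _ \<open>a \<in> I\<close> \<open>b + h \<in> I\<close>, of "1 - \<mu>"] \<mu> b by simp
  ultimately show ?thesis by (simp add: algebra_simps)
qed

lemma relaxed_step_factor_bounds:
  fixes \<theta> k a :: real
  assumes "0 < k" "k < a" "a \<le> 1" "0 \<le> \<theta>" "\<theta> * (2 - k) \<le> k"
  shows "(1 + \<theta>) * (a - k) < a" and "2 * \<theta> * a \<le> k * (1 + \<theta>)"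
proof -
  have "\<theta> * a \<le> \<theta>" using mult_left_mono[OF \<open>a \<le> 1\<close> \<open>0 \<le> \<theta>\<close>] by simp
  moreover have "0 \<le> \<theta> * k" using assms by simp
  moreover have "\<theta> * (2 - k) = 2 * \<theta> - \<theta> * k" "(1 + \<theta>) * (a - k) = a - k + \<theta> * a - \<theta> * k"
    "k * (1 + \<theta>) = k + \<theta> * k" by (simp_all add: algebra_simps)
  ultimately show "(1 + \<theta>) * (a - k) < a" "2 * \<theta> * a \<le> k * (1 + \<theta>)"
    using assms by linarith+
qed

locale majorant_function =
  fixes f f' :: "real \<Rightarrow> real" and R :: real
  assumes deriv: "\<forall>t \<in> {0..<R}. (f has_real_derivative f' t) (at t within {0..<R})"
    and f_0_pos: "0 < f 0" and f'_0: "f' 0 = -1"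
    and f'_strict_mono: "strict_mono_on {0..<R} f'"
    and f'_convex: "convex_on {0..<R} f'"
    and f_neg: "\<exists>t \<in> {0<..<R}. f t < 0"
begin

lemma R_pos: "0 < R"
  using f_neg by auto

lemma above_tangent_strict:
  "r \<in> {0..<R} \<Longrightarrow> s \<in> {0..<R} \<Longrightarrow> r \<noteq> s \<Longrightarrow> f s + f' s * (r - s) < f r"
  by (rule strict_mono_derivative_above_tangent[OF _ deriv f'_strict_mono])
    (simp add: is_interval_1)

lemma above_tangent: "r \<in> {0..<R} \<Longrightarrow> s \<in> {0..<R} \<Longrightarrow> f s + f' s * (r - s) \<le> f r"
  using above_tangent_strict by (cases "r = s") (auto simp: less_imp_le)

lemma f_has_real_derivative_at:
  assumes "s \<in> {0<..<R}"
  shows "(f has_real_derivative f' s) (at s)"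
proof -
  have "(f has_real_derivative f' s) (at s within {0..<R})" using deriv assms by simp
  moreover have "at s within {0..<R} = at s" using assms by (intro at_within_interior) simp
  ultimately show ?thesis by simp
qed

lemma f'_mono: "s \<in> {0..<R} \<Longrightarrow> t \<in> {0..<R} \<Longrightarrow> s \<le> t \<Longrightarrow> f' s \<le> f' t"
  using strict_mono_onD[OF f'_strict_mono, of s t] by (cases "s = t") auto

lemma f'_ge_minus_1: "t \<in> {0..<R} \<Longrightarrow> -1 \<le> f' t"
  using f'_mono[of 0 t] f'_0 R_pos by simp

lemma tangent_gap_mono:
  assumes "0 \<le> t" "0 \<le> \<rho>" "\<rho> \<le> \<sigma>" "t + \<sigma> < R"
  shows "f (t + \<rho>) - f' t * \<rho> \<le> f (t + \<sigma>) - f' t * \<sigma>"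
proof -
  have "f (t + \<rho>) + f' (t + \<rho>) * (\<sigma> - \<rho>) \<le> f (t + \<sigma>)"
    using above_tangent[of "t + \<sigma>" "t + \<rho>"] assms by simp
  moreover have "f' t * (\<sigma> - \<rho>) \<le> f' (t + \<rho>) * (\<sigma> - \<rho>)"
    using f'_mono[of t "t + \<rho>"] assms by (intro mult_right_mono) auto
  ultimately show ?thesis by (simp add: algebra_simps)
qed

lemma continuous_on_f_ray:
  assumes "0 \<le> t" "0 \<le> r" "t + r < R"
  shows "continuous_on {0..1} (\<lambda>\<tau>. f (t + \<tau> * r) - \<tau> * (f' t * r))"
proof -
  have "continuous_on {0..<R} f" using deriv by (intro DERIV_continuous_on) auto
  moreover have "continuous_on {0..1} (\<lambda>\<tau>. t + \<tau> * r)" by (intro continuous_intros)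
  moreover have "(\<lambda>\<tau>. t + \<tau> * r) ` {0..1} \<subseteq> {0..<R}"
  proof (rule image_subsetI)
    fix \<tau> :: real assume "\<tau> \<in> {0..1}"
    then have "0 \<le> \<tau> * r" "\<tau> * r \<le> r" using assms mult_left_le_one_le[of r \<tau>] by auto
    with assms show "t + \<tau> * r \<in> {0..<R}" by simp
  qed
  ultimately have "continuous_on {0..1} (\<lambda>\<tau>. f (t + \<tau> * r))"
    by (rule continuous_on_compose2)
  then show ?thesis by (intro continuous_on_diff continuous_intros)
qed

lemma has_vector_derivative_f_ray:
  assumes "t + \<tau> * r \<in> {0<..<R}"
  shows "((\<lambda>\<tau>. f (t + \<tau> * r) - \<tau> * (f' t * r)) has_vector_derivative (f' (t + \<tau> * r) - f' t) * r)
    (at \<tau>)"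
proof -
  have "((\<lambda>\<tau>. t + \<tau> * r) has_real_derivative r) (at \<tau>)"
    using DERIV_add[OF DERIV_const[of t] DERIV_cmult_right[OF DERIV_ident, of r]] by simp
  then have "((\<lambda>\<tau>. f (t + \<tau> * r)) has_real_derivative f' (t + \<tau> * r) * r) (at \<tau>)"
    by (rule DERIV_chain2[where g = "\<lambda>\<tau>. t + \<tau> * r", OF f_has_real_derivative_at[OF assms]])
  moreover have "((\<lambda>\<tau>. \<tau> * (f' t * r)) has_real_derivative f' t * r) (at \<tau>)"
    using DERIV_cmult_right[OF DERIV_ident, of "f' t * r"] by simp
  ultimately have "((\<lambda>\<tau>. f (t + \<tau> * r) - \<tau> * (f' t * r)) has_real_derivative
      (f' (t + \<tau> * r) - f' t) * r) (at \<tau>)"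
    unfolding left_diff_distrib by (rule DERIV_diff)
  then show ?thesis by (simp add: has_real_derivative_iff_has_vector_derivative)
qed

lemma kappa_upper: "s \<in> {0<..<R} \<Longrightarrow> - f s / s \<le> kappa f R"
  and kappa_less_1: "kappa f R < 1"
proof -
  have bound: "- f s / s \<le> 1 - f 0 / R" if s: "s \<in> {0<..<R}" for s
  proof -
    have "- f s \<le> s - f 0" using above_tangent[of s 0] f'_0 s by simp
    then have "- f s / s \<le> 1 - f 0 / s" using s by (simp add: field_simps)
    also have "\<dots> \<le> 1 - f 0 / R" using s f_0_pos by (simp add: frac_le)
    finally show ?thesis .
  qed
  then have "bdd_above ((\<lambda>t. - f t / t) ` {0<..<R})" by (rule bdd_aboveI2)
  then show "s \<in> {0<..<R} \<Longrightarrow> - f s / s \<le> kappa f R"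
    unfolding kappa_def by (auto intro: cSup_upper)
  have "kappa f R \<le> 1 - f 0 / R"
    unfolding kappa_def using bound R_pos by (auto intro!: cSup_least)
  then show "kappa f R < 1" using divide_pos_pos[OF f_0_pos R_pos] by linarith
qed

lemma kappa_pos: "0 < kappa f R"
proof -
  obtain t where t: "t \<in> {0<..<R}" "f t < 0" using f_neg by auto
  then have "0 < - f t / t" by (simp add: divide_neg_pos)
  with kappa_upper[OF t(1)] show ?thesis by linarith
qed

lemma Theta_bound:
  assumes "\<theta> \<le> Theta f R"
  shows "\<theta> * (2 - kappa f R) \<le> kappa f R"
  using assms kappa_less_1 by (simp add: Theta_def le_divide_eq)

lemma kappa_approx:
  assumes "0 < c"
  obtains r where "r \<in> {0<..<R}" "f r + kappa f R * r < c"
proof -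
  let ?S = "(\<lambda>t. - f t / t) ` {0<..<R}"
  have "?S \<noteq> {}" using R_pos by auto
  moreover have "bdd_above ?S" using kappa_upper by (rule bdd_aboveI2)
  moreover have "kappa f R - c / R < Sup ?S"
    using assms R_pos by (simp add: kappa_def)
  ultimately obtain r where r: "r \<in> {0<..<R}" "kappa f R - c / R < - f r / r"
    by (auto simp: less_cSup_iff)
  then have "f r + kappa f R * r < c * r / R" by (simp add: field_simps)
  also have "\<dots> < c" using r assms by (simp add: divide_less_eq)
  finally show ?thesis using r that by blast
qed

lemma zero_in_lam_set: "0 \<in> {t \<in> {0..<R}. kappa f R + f' t < 0}"
  using R_pos f'_0 kappa_less_1 by simp

lemma lam_le_R: "lam f f' R \<le> R"
  unfolding lam_def using zero_in_lam_set by (intro cSup_least) auto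

lemma lam_le_tbar: "lam f f' R \<le> tbar f' R"
  unfolding lam_def tbar_def
proof (rule cSup_subset_mono)
  show "{t \<in> {0..<R}. kappa f R + f' t < 0} \<noteq> {}" using zero_in_lam_set by blast
  show "bdd_above {t \<in> {0..<R}. f' t < 0}" by (rule bdd_aboveI[of _ R]) auto
  show "{t \<in> {0..<R}. kappa f R + f' t < 0} \<subseteq> {t \<in> {0..<R}. f' t < 0}"
    using kappa_pos by auto
qed

lemma deriv_below_lam:
  assumes "0 \<le> t" "t < lam f f' R"
  shows "f' t + kappa f R < 0"
proof -
  let ?L = "{t \<in> {0..<R}. kappa f R + f' t < 0}"
  have "?L \<noteq> {}" "bdd_above ?L"
    using zero_in_lam_set by (auto intro: bdd_aboveI[of _ R])
  then obtain s where s: "s \<in> ?L" "t < s"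
    using assms(2) by (auto simp: lam_def less_cSup_iff)
  then have "f' t \<le> f' s" using assms(1) by (intro f'_mono) auto
  with s show ?thesis by simp
qed

lemma less_lam_if_tangent_pos:
  assumes t: "t \<in> {0..<R}" and slope: "f' t + kappa f R < 0" and "t \<le> s"
    and pos: "0 < f t + kappa f R * t + (f' t + kappa f R) * (s - t)"
  shows "s < lam f f' R"
proof -
  define k where "k = kappa f R"
  define m where "m = f' t + k"
  define l where "l r = f t + k * t + m * (r - t)" for r
  have below: "l r \<le> f r + k * r" if "r \<in> {0..<R}" for r
    using above_tangent[OF that t] by (simp add: l_def m_def algebra_simps)
  define s' where "s' = s - l s / (2 * m)"
  have "m < 0" "0 < l s" using slope pos by (simp_all add: m_def k_def l_def)
  then have "s < s'" "l s' = l s / 2"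
    by (simp_all add: s'_def l_def field_simps)
  with \<open>0 < l s\<close> have "s < s'" "0 < l s'" by simp_all
  have "s' < R \<and> k + f' s' < 0"
  proof (rule ccontr)
    assume stop: "\<not> (s' < R \<and> k + f' s' < 0)"
    have bound: "l s' \<le> f r + k * r" if r: "r \<in> {0<..<R}" for r
    proof (cases "r \<le> s'")
      case True
      then have "l s' \<le> l r" using \<open>m < 0\<close> by (simp add: l_def mult_left_mono_neg)
      with below[of r] r show ?thesis by simp
    next
      case False
      then have s': "s' \<in> {0..<R}" "0 \<le> k + f' s'"
        using r stop t \<open>t \<le> s\<close> \<open>s < s'\<close> by auto
      have "f s' + f' s' * (r - s') \<le> f r" using above_tangent[OF _ s'(1)] r by simp
      moreover have "0 \<le> (k + f' s') * (r - s')" using s'(2) False by simp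
      moreover have "l s' \<le> f s' + k * s'" using below[OF s'(1)] .
      ultimately show ?thesis by (simp add: algebra_simps)
    qed
    obtain r where "r \<in> {0<..<R}" "f r + k * r < l s'"
      using kappa_approx[OF \<open>0 < l s'\<close>] unfolding k_def .
    with bound show False by fastforce
  qed
  then have "s' \<in> {t \<in> {0..<R}. kappa f R + f' t < 0}"
    using \<open>t \<le> s\<close> \<open>s < s'\<close> t by (simp add: k_def)
  moreover have "bdd_above {t \<in> {0..<R}. kappa f R + f' t < 0}" by (rule bdd_aboveI[of _ R]) auto
  ultimately have "s' \<le> lam f f' R" unfolding lam_def by (rule cSup_upper)
  with \<open>s < s'\<close> show ?thesis by simp
qed

lemma n_theta_in_Omega:
  assumes \<theta>: "0 \<le> \<theta>" "\<theta> \<le> Theta f R" and p: "p \<in> Omega f f' R"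
  shows "n_theta f f' \<theta> p \<in> Omega f f' R"
proof -
  obtain t e where p_eq: "p = (t, e)" by (cases p)
  define k where "k = kappa f R"
  define u where "u = f t + e"
  define a where "a = - f' t"
  define tp where "tp = t + (1 + \<theta>) * u / a"
  have t: "0 \<le> t" "t < lam f f' R" and e: "0 \<le> e" "e \<le> k * t" and "0 < u"
    using p by (auto simp: p_eq Omega_def k_def u_def)
  have tR: "t \<in> {0..<R}" using t lam_le_R by auto
  have "0 < k" "k < a" "a \<le> 1" "\<theta> * (2 - k) \<le> k"
    using kappa_pos deriv_below_lam[OF t] f'_ge_minus_1[OF tR] Theta_bound[OF \<theta>(2)]
    by (auto simp: k_def a_def)
  note factor = relaxed_step_factor_bounds[OF this(1-3) \<theta>(1) this(4)]
  have "0 < a" using \<open>0 < k\<close> \<open>k < a\<close> by simp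
  have n: "n_theta f f' \<theta> p = (tp, e + 2 * \<theta> * u)"
    by (simp add: p_eq n_theta_def tp_def u_def a_def)
  have step: "0 < tp - t" using \<open>0 < a\<close> \<open>0 < u\<close> \<theta> by (simp add: tp_def)
  have "(a - k) * (tp - t) = ((1 + \<theta>) * (a - k)) * u / a" by (simp add: tp_def)
  also have "\<dots> < u" using factor(1) \<open>0 < a\<close> \<open>0 < u\<close> by (simp add: divide_less_eq)
  finally have "0 < f t + k * t + (f' t + k) * (tp - t)"
    using e by (simp add: u_def a_def algebra_simps)
  then have tp_lam: "tp < lam f f' R"
    using less_lam_if_tangent_pos[OF tR deriv_below_lam[OF t]] step by (simp add: k_def)
  then have tpR: "tp \<in> {0..<R}" using step t lam_le_R by auto
  have "2 * \<theta> * u = (2 * \<theta> * a) * (u / a)" using \<open>0 < a\<close> by simp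
  also have "\<dots> \<le> (k * (1 + \<theta>)) * (u / a)"
    using factor(2) \<open>0 < a\<close> \<open>0 < u\<close> by (intro mult_right_mono) simp_all
  also have "\<dots> = k * (tp - t)" by (simp add: tp_def)
  finally have "2 * \<theta> * u \<le> k * (tp - t)" .
  then have ep_le: "e + 2 * \<theta> * u \<le> k * tp" using e by (simp add: algebra_simps)
  have "f t + f' t * (tp - t) < f tp"
    using above_tangent_strict[OF tpR tR] step by simp
  moreover have "f' t * (tp - t) = - ((1 + \<theta>) * u)" using \<open>0 < a\<close> by (simp add: tp_def a_def)
  moreover have "0 \<le> \<theta> * u" using \<theta>(1) \<open>0 < u\<close> by simp
  ultimately have ep_pos: "0 < f tp + (e + 2 * \<theta> * u)" by (simp add: u_def algebra_simps)
  show ?thesis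
    unfolding n Omega_def using tp_lam step t e ep_le ep_pos \<open>0 \<le> \<theta> * u\<close>
    by (simp add: k_def)
qed

end

locale newton_majorant = majorant_function f f' R
  for f f' :: "real \<Rightarrow> real" and R :: real +
  fixes F :: "'a::real_normed_vector \<Rightarrow> 'b::real_normed_vector"
    and F' :: "'a \<Rightarrow> ('a \<Rightarrow>\<^sub>L 'b)" and Finv :: "'b \<Rightarrow>\<^sub>L 'a" and x0 :: 'a
  assumes F_deriv: "\<forall>x \<in> ball x0 R. (F has_derivative blinfun_apply (F' x)) (at x)"
    and Finv_left: "Finv o\<^sub>L F' x0 = id_blinfun"
    and majorant: "\<forall>x \<in> ball x0 R. \<forall>y \<in> ball x0 R. norm (x - x0) + norm (y - x) < R \<longrightarrow>
      norm (Finv o\<^sub>L (F' y - F' x)) \<le> f' (norm (y - x) + norm (x - x0)) - f' (norm (x - x0))"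
begin

lemma norm_Finv_F'_diff_le:
  assumes "x \<in> ball x0 R" "y \<in> ball x0 R" "norm (x - x0) \<le> t" "t + norm (y - x) < R"
  shows "norm (Finv o\<^sub>L (F' y - F' x)) \<le> f' (t + norm (y - x)) - f' t"
proof -
  let ?s = "norm (x - x0)"
  have "norm (Finv o\<^sub>L (F' y - F' x)) \<le> f' (?s + norm (y - x)) - f' ?s"
    using majorant assms by (simp add: add.commute)
  also have "\<dots> \<le> f' (t + norm (y - x)) - f' t"
    using assms(3,4) norm_ge_zero[of "x - x0"] norm_ge_zero[of "y - x"]
    by (intro convex_on_increment_mono[OF f'_convex]) (auto simp del: norm_ge_zero)
  finally show ?thesis .
qed

lemma norm_Finv_F'_ge:
  assumes "x \<in> ball x0 R"
  shows "- f' (norm (x - x0)) * norm d \<le> norm (Finv (F' x d))"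
proof -
  let ?E = "Finv o\<^sub>L (F' x - F' x0)"
  have "norm (x - x0) < R" using assms by (simp add: dist_norm norm_minus_commute)
  then have "norm ?E \<le> f' (norm (x - x0)) + 1"
    using majorant[rule_format, of x0 x] assms f'_0 R_pos by simp
  then have "norm (?E d) \<le> (f' (norm (x - x0)) + 1) * norm d"
    by (meson norm_blinfun mult_right_mono norm_ge_zero order_trans)
  moreover have "(Finv o\<^sub>L F' x0) d = d" by (simp add: Finv_left)
  then have "Finv (F' x d) = d + ?E d" by (simp add: blinfun.diff_left blinfun.diff_right)
  then have "norm d \<le> norm (Finv (F' x d)) + norm (?E d)"
    by (metis add_diff_cancel_right' norm_triangle_ineq4)
  ultimately show ?thesis by (simp add: algebra_simps)
qed

lemma has_vector_derivative_Finv_F_line: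
  assumes "x + \<tau> *\<^sub>R d \<in> ball x0 R"
  shows "((\<lambda>\<tau>. Finv (F (x + \<tau> *\<^sub>R d))) has_vector_derivative Finv (F' (x + \<tau> *\<^sub>R d) d)) (at \<tau>)"
proof -
  let ?y = "x + \<tau> *\<^sub>R d"
  have "((\<lambda>\<tau>. x + \<tau> *\<^sub>R d) has_derivative (\<lambda>h. h *\<^sub>R d)) (at \<tau>)"
    by (auto intro!: derivative_eq_intros)
  from has_derivative_compose[OF this F_deriv[rule_format, OF assms]]
  have "((\<lambda>\<tau>. Finv (F (x + \<tau> *\<^sub>R d))) has_derivative (\<lambda>h. Finv (F' ?y (h *\<^sub>R d)))) (at \<tau>)"
    by (rule has_derivative_compose[OF _ bounded_linear_imp_has_derivative[OF blinfun.bounded_linear_right]])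
  moreover have "(\<lambda>h. Finv (F' ?y (h *\<^sub>R d))) = (\<lambda>h. h *\<^sub>R Finv (F' ?y d))"
    by (simp add: blinfun.scaleR_right)
  ultimately show ?thesis by (simp add: has_vector_derivative_def)
qed

lemma line_in_ball:
  assumes "norm (x - x0) \<le> t" "t + norm d < R" "0 \<le> \<tau>" "\<tau> \<le> 1"
  shows "x + \<tau> *\<^sub>R d \<in> ball x0 R"
proof -
  have "norm (x + \<tau> *\<^sub>R d - x0) \<le> norm (x - x0) + \<tau> * norm d"
    using norm_triangle_ineq[of "x - x0" "\<tau> *\<^sub>R d"] assms(3) by (simp add: algebra_simps)
  also have "\<dots> \<le> t + norm d"
    using assms mult_left_le_one_le[of "norm d" \<tau>] by simp
  finally show ?thesis using assms(2) by (simp add: dist_norm norm_minus_commute)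
qed

lemma norm_Finv_F'_ray_diff_le:
  assumes x: "norm (x - x0) \<le> t" and d: "t + norm d < R" and \<tau>: "0 \<le> \<tau>" "\<tau> \<le> 1"
  shows "norm (Finv (F' (x + \<tau> *\<^sub>R d) d) - Finv (F' x d)) \<le> (f' (t + \<tau> * norm d) - f' t) * norm d"
proof -
  let ?y = "x + \<tau> *\<^sub>R d"
  have balls: "x \<in> ball x0 R" "?y \<in> ball x0 R"
    using line_in_ball[OF x d, of 0] line_in_ball[OF x d, of \<tau>] \<tau> by simp_all
  have y_x: "norm (?y - x) = \<tau> * norm d" using \<tau> by simp
  have "\<tau> * norm d \<le> norm d" using \<tau> mult_left_le_one_le[of "norm d"] by simp
  then have "t + norm (?y - x) < R" unfolding y_x using d by linarith
  then have "norm (Finv o\<^sub>L (F' ?y - F' x)) \<le> f' (t + norm (?y - x)) - f' t"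
    using norm_Finv_F'_diff_le balls x by blast
  then have "norm (Finv o\<^sub>L (F' ?y - F' x)) \<le> f' (t + \<tau> * norm d) - f' t"
    unfolding y_x .
  moreover have "Finv (F' ?y d) - Finv (F' x d) = (Finv o\<^sub>L (F' ?y - F' x)) d"
    by (simp add: blinfun.diff_left blinfun.diff_right)
  ultimately show ?thesis
    by (metis norm_blinfun mult_right_mono norm_ge_zero order_trans)
qed

text \<open>The error of the linearization of \<open>F\<close> at \<open>x\<close> is majorized by that of \<open>f\<close> at
  \<open>t \<ge> \<parallel>x - x0\<parallel>\<close>: by the mean value inequality, compare
  \<open>\<tau> \<mapsto> Finv (F (x + \<tau> d)) - \<tau> Finv (F' x d)\<close> with \<open>\<tau> \<mapsto> f (t + \<tau> \<parallel>d\<parallel>) - \<tau> f' t \<parallel>d\<parallel>\<close>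
  on \<open>[0, 1]\<close>.\<close>

lemma linearization_error_bound:
  assumes x: "norm (x - x0) \<le> t" and d: "t + norm d < R"
  shows "norm (Finv (F (x + d) - F x - F' x d)) \<le> f (t + norm d) - f t - f' t * norm d"
proof (cases "d = 0")
  case True
  then show ?thesis by simp
next
  case False
  define G where "G \<tau> = Finv (F (x + \<tau> *\<^sub>R d)) - \<tau> *\<^sub>R Finv (F' x d)" for \<tau>
  define \<phi> where "\<phi> \<tau> = f (t + \<tau> * norm d) - \<tau> * (f' t * norm d)" for \<tau>
  have t: "0 \<le> t" using x norm_ge_zero order_trans by blast
  have G_deriv: "(G has_vector_derivative Finv (F' (x + \<tau> *\<^sub>R d) d) - Finv (F' x d)) (at \<tau>)"
    if "\<tau> \<in> {0..1}" for \<tau>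
  proof -
    have "((\<lambda>\<tau>. \<tau> *\<^sub>R Finv (F' x d)) has_vector_derivative Finv (F' x d)) (at \<tau>)"
      by (auto intro!: derivative_eq_intros)
    moreover have "x + \<tau> *\<^sub>R d \<in> ball x0 R" using line_in_ball[OF x d] that by simp
    ultimately show ?thesis
      unfolding G_def by (intro has_vector_derivative_diff has_vector_derivative_Finv_F_line)
  qed
  have "norm (G 1 - G 0) \<le> \<phi> 1 - \<phi> 0"
  proof (rule differentiable_bound_general[OF zero_less_one])
    show "continuous_on {0..1} G"
      by (meson G_deriv continuous_at_imp_continuous_on has_vector_derivative_continuous)
    show "continuous_on {0..1} \<phi>" unfolding \<phi>_def using t d by (intro continuous_on_f_ray) auto
    fix \<tau> :: real assume \<tau>: "0 < \<tau>" "\<tau> < 1"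
    show "(G has_vector_derivative Finv (F' (x + \<tau> *\<^sub>R d) d) - Finv (F' x d)) (at \<tau>)"
      using G_deriv \<tau> by simp
    have "0 < \<tau> * norm d" "\<tau> * norm d \<le> norm d"
      using \<tau> False mult_left_le_one_le[of "norm d" \<tau>] by simp_all
    then show "(\<phi> has_vector_derivative (f' (t + \<tau> * norm d) - f' t) * norm d) (at \<tau>)"
      unfolding \<phi>_def using t d by (intro has_vector_derivative_f_ray) simp
    show "norm (Finv (F' (x + \<tau> *\<^sub>R d) d) - Finv (F' x d)) \<le> (f' (t + \<tau> * norm d) - f' t) * norm d"
      using norm_Finv_F'_ray_diff_le[OF x d] \<tau> by simp
  qed
  moreover have "G 1 - G 0 = Finv (F (x + d) - F x - F' x d)"
    by (simp add: G_def blinfun.diff_right)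
  moreover have "\<phi> 1 - \<phi> 0 = f (t + norm d) - f t - f' t * norm d"
    by (simp add: \<phi>_def)
  ultimately show ?thesis by simp
qed

lemma newton_step_bounds:
  assumes t: "0 \<le> t" "f' t < 0" and x: "norm (x - x0) \<le> t" and Fx: "norm (Finv (F x)) \<le> u"
    and \<theta>: "0 \<le> \<theta>" and residual: "norm (Finv (F x + F' x (y - x))) \<le> \<theta> * u"
    and step: "t + (1 + \<theta>) * u / - f' t < R"
  shows "norm (y - x) \<le> (1 + \<theta>) * u / - f' t"
    and "norm (Finv (F y)) \<le> f (t + (1 + \<theta>) * u / - f' t) - f t + (1 + 2 * \<theta>) * u"
proof -
  define d where "d = y - x"
  define a where "a = - f' t"
  define \<sigma> where "\<sigma> = (1 + \<theta>) * u / a"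
  have "0 < a" using t by (simp add: a_def)
  have "0 \<le> u" using Fx norm_ge_zero order_trans by blast
  then have "0 \<le> \<sigma>" using \<open>0 < a\<close> \<theta> by (simp add: \<sigma>_def)
  then have tR: "t \<in> {0..<R}" using t step by (simp add: \<sigma>_def a_def)
  have "norm (x - x0) < R" using x tR by simp
  then have "- f' (norm (x - x0)) * norm d \<le> norm (Finv (F' x d))"
    by (intro norm_Finv_F'_ge) (simp add: dist_norm norm_minus_commute)
  moreover have "- f' t * norm d \<le> - f' (norm (x - x0)) * norm d"
    using f'_mono[of "norm (x - x0)" t] x tR by (intro mult_right_mono) auto
  ultimately have "- f' t * norm d \<le> norm (Finv (F' x d))" by linarith
  also have "\<dots> \<le> norm (Finv (F x + F' x d)) + norm (Finv (F x))"
    using norm_triangle_ineq4[of "Finv (F x + F' x d)" "Finv (F x)"] by (simp add: blinfun.add_right)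
  also have "\<dots> \<le> (1 + \<theta>) * u" using residual Fx by (simp add: d_def algebra_simps)
  finally have "a * norm d \<le> (1 + \<theta>) * u" by (simp add: a_def)
  then have "norm d \<le> \<sigma>" using \<open>0 < a\<close> by (simp add: \<sigma>_def pos_le_divide_eq mult.commute)
  then show "norm (y - x) \<le> (1 + \<theta>) * u / - f' t" by (simp add: d_def \<sigma>_def a_def)
  have "norm (Finv (F (x + d) - F x - F' x d)) \<le> f (t + norm d) - f t - f' t * norm d"
    using linearization_error_bound[OF x] \<open>norm d \<le> \<sigma>\<close> step by (simp add: \<sigma>_def a_def)
  also have "\<dots> \<le> f (t + \<sigma>) - f t - f' t * \<sigma>"
    using tangent_gap_mono[OF t(1) norm_ge_zero \<open>norm d \<le> \<sigma>\<close>] step by (simp add: \<sigma>_def a_def)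
  also have "\<dots> = f (t + \<sigma>) - f t + (1 + \<theta>) * u" using \<open>0 < a\<close> by (simp add: \<sigma>_def a_def)
  finally have "norm (Finv (F (x + d) - F x - F' x d)) \<le> f (t + \<sigma>) - f t + (1 + \<theta>) * u" .
  moreover have "Finv (F y) = Finv (F x + F' x d) + Finv (F (x + d) - F x - F' x d)"
    by (simp add: d_def blinfun.add_right blinfun.diff_right)
  then have "norm (Finv (F y)) \<le> norm (Finv (F x + F' x d)) + norm (Finv (F (x + d) - F x - F' x d))"
    by (simp only: norm_triangle_ineq)
  ultimately show "norm (Finv (F y)) \<le> f (t + (1 + \<theta>) * u / - f' t) - f t + (1 + 2 * \<theta>) * u"
    using residual by (simp add: d_def \<sigma>_def a_def algebra_simps)
qed

lemma Nfamily_maps_Kset: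
  assumes \<theta>: "0 \<le> \<theta>" "\<theta> \<le> Theta f R" and N: "N \<in> Nfamily Finv F F' x0 (tbar f' R) \<theta>"
    and p: "p \<in> Omega f f' R" and x: "x \<in> Kset Finv F x0 f p"
  shows "N x \<in> Kset Finv F x0 f (n_theta f f' \<theta> p)"
    and "norm (N x - x) \<le> fst (n_theta f f' \<theta> p) - fst p"
proof -
  obtain t e where p_eq: "p = (t, e)" by (cases p)
  define tp where "tp = t + (1 + \<theta>) * (f t + e) / - f' t"
  have n: "n_theta f f' \<theta> p = (tp, e + 2 * \<theta> * (f t + e))"
    by (simp add: p_eq n_theta_def tp_def)
  have t: "0 \<le> t" "t < lam f f' R" using p by (simp_all add: p_eq Omega_def)
  then have "f' t < 0" using deriv_below_lam[OF t] kappa_pos by linarith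
  have x: "norm (x - x0) \<le> t" "norm (Finv (F x)) \<le> f t + e"
    using x by (simp_all add: p_eq Kset_def)
  then have "x \<in> ball x0 (tbar f' R)"
    using t lam_le_tbar by (simp add: dist_norm norm_minus_commute)
  then have "norm (Finv (F x + F' x (N x - x))) \<le> \<theta> * norm (Finv (F x))"
    using N by (simp add: Nfamily_def)
  also have "\<dots> \<le> \<theta> * (f t + e)" using x(2) \<theta>(1) by (rule mult_left_mono)
  finally have residual: "norm (Finv (F x + F' x (N x - x))) \<le> \<theta> * (f t + e)" .
  have "tp < R"
    using n_theta_in_Omega[OF \<theta> p] lam_le_R by (simp add: n Omega_def)
  note step = newton_step_bounds[OF t(1) \<open>f' t < 0\<close> x \<theta>(1) residual, folded tp_def, OF this]
  have d: "norm (N x - x) \<le> tp - t" using step(1) by (simp add: tp_def)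
  then have "norm (N x - x0) \<le> tp"
    using norm_triangle_ineq[of "N x - x" "x - x0"] x(1) by simp
  moreover have "norm (Finv (F (N x))) \<le> f tp + (e + 2 * \<theta> * (f t + e))"
    using step(2) by (simp add: algebra_simps)
  ultimately show "N x \<in> Kset Finv F x0 f (n_theta f f' \<theta> p)" by (simp add: n Kset_def)
  show "norm (N x - x) \<le> fst (n_theta f f' \<theta> p) - fst p" unfolding n using d p_eq by simp
qed

end

theorem proposition4p5:
  fixes F :: "'a::banach \<Rightarrow> 'b::banach"
    and F' :: "'a \<Rightarrow> ('a \<Rightarrow>\<^sub>L 'b)"
    and Finv :: "'b \<Rightarrow>\<^sub>L 'a"
    and C :: "'a set" and x0 :: 'a
    and f f' :: "real \<Rightarrow> real" and R \<theta> :: real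
    and N :: "'a \<Rightarrow> 'a"
  assumes F_cont: "continuous_on C F"
    and F_deriv: "\<forall>x \<in> interior C. (F has_derivative blinfun_apply (F' x)) (at x)"
    and F'_cont: "continuous_on (interior C) F'"
    and x0_int: "x0 \<in> interior C"
    and Finv_left: "Finv o\<^sub>L F' x0 = id_blinfun"
    and Finv_right: "F' x0 o\<^sub>L Finv = id_blinfun"
    and f_deriv: "\<forall>t \<in> {0..<R}. (f has_real_derivative f' t) (at t within {0..<R})"
    and f'_cont: "continuous_on {0..<R} f'"
    and ball_sub: "ball x0 R \<subseteq> C"
    and majorant: "\<forall>x \<in> ball x0 R. \<forall>y \<in> ball x0 R. norm (x - x0) + norm (y - x) < R \<longrightarrow>
        norm (Finv o\<^sub>L (F' y - F' x)) \<le> f' (norm (y - x) + norm (x - x0)) - f' (norm (x - x0))"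
    and init: "norm (blinfun_apply Finv (F x0)) \<le> f 0"
    and h1: "f 0 > 0" "f' 0 = -1"
    and h2: "strict_mono_on {0..<R} f'" "convex_on {0..<R} f'"
    and h3: "\<exists>t \<in> {0<..<R}. f t < 0"
    and theta: "0 \<le> \<theta>" "\<theta> \<le> Theta f R"
    and N: "N \<in> Nfamily Finv F F' x0 (tbar f' R) \<theta>"
  shows "(\<forall>p \<in> Omega f f' R.
           N ` Kset Finv F x0 f p \<subseteq> Kset Finv F x0 f (n_theta f f' \<theta> p)
         \<and> Kset Finv F x0 f (n_theta f f' \<theta> p) \<subseteq> Kall Finv F x0 f f' R
         \<and> (\<forall>x \<in> Kset Finv F x0 f p. norm (N x - x) \<le> fst (n_theta f f' \<theta> p) - fst p))
       \<and> n_theta f f' \<theta> ` Omega f f' R \<subseteq> Omega f f' R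
       \<and> N ` Kall Finv F x0 f f' R \<subseteq> Kall Finv F x0 f f' R"
  \<comment> \<open>Only the hypotheses on \<open>ball x0 R\<close> and the left inverse enter this one-step result.\<close>
proof -
  interpret newton_majorant f f' R F F' Finv x0
  proof unfold_locales
    show "\<forall>x \<in> ball x0 R. (F has_derivative blinfun_apply (F' x)) (at x)"
      using F_deriv interior_maximal[OF ball_sub open_ball] by blast
  qed (fact f_deriv h1 h2 h3 Finv_left majorant)+
  have Kset_sub: "Kset Finv F x0 f p \<subseteq> Kall Finv F x0 f f' R" if "p \<in> Omega f f' R" for p
    unfolding Kall_def using that by blast
  have N_Kset: "N ` Kset Finv F x0 f p \<subseteq> Kset Finv F x0 f (n_theta f f' \<theta> p)"
    if "p \<in> Omega f f' R" for p
    using Nfamily_maps_Kset(1)[OF theta N that] by blast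
  have "N ` Kall Finv F x0 f f' R \<subseteq> Kall Finv F x0 f f' R"
    unfolding Kall_def image_UN
    using N_Kset Kset_sub n_theta_in_Omega[OF theta] unfolding Kall_def by blast
  then show ?thesis
    using N_Kset Kset_sub n_theta_in_Omega[OF theta] Nfamily_maps_Kset(2)[OF theta N] by blast
qed

end
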